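(* Let $d$ be a positive integer and let $X=\{X_k:k\in\mathbb{Z}^d\}$ be a centered, complex-valued, weakly stationary random field such that $\varrho'(X,n)\to 0$ as $n\to\infty$, and let $f$ denote its (continuous) spectral density, writing $f(\lambda):=f(e^{i\lambda})$. Let $\{v^{(n)}\}_{n=1}^\infty$ be a sequence of vectors in $\mathbb{N}^d$ with $\lim_{n\to\infty}\min\{v^{(n)}_1,\dots,v^{(n)}_d\}=\infty$. Then \[\lim_{n\to\infty} E\, I_n^{(\lambda)}=f(\lambda)\quad\text{for all }\lambda\in(-\pi,\pi]^d,\] and this convergence is uniform over all $\lambda\in(-\pi,\pi]^d$.
   Context: A random field $X=\{X_k:k\in\mathbb{Z}^d\}$ is a collection of complex random variables indexed by $\mathbb{Z}^d$; it is centered if $EX_k=0$ for all $k$. It is weakly stationary if $E|X_k|^2=\sigma^2<\infty$ for all $k$, $EX_k$ is constant, and $E(X_k-\mu)\overline{(X_j-\mu)}$ depends only on $k-j$. For $\sigma$-fields $\mathcal A,\mathcal B$, $\varrho(\mathcal A,\mathcal B)=\sup \mathrm{Corr}(f,g)$ over real $f\in L^2(\mathcal A)$, $g\in L^2(\mathcal B)$. For $n\ge1$, $\varrho'(X,n)=\sup_{S,T}\varrho(\sigma(X_k:k\in S),\sigma(X_k:k\in T))$, the supremum over finite nonempty $S,T\subset\mathbb{Z}^d$ for which there is a coordinate $u\in\{1,\dots,d\}$ with $|k_u-l_u|\ge n$ for all $k\in S$, $l\in T$ (the sets may be interlaced). A nonnegative Borel function $f$ on the torus $\mathbb{T}^d$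 is the spectral density of $X$ if $EX_k\overline{X_j}=\int_{\mathbb{T}^d}e^{i(k-j)\cdot\theta}f(e^{i\theta})\,dm^d(e^{i\theta})$, where $m^d$ is normalized Lebesgue (Haar) measure on $\mathbb{T}^d$; such fields with $\varrho'(X,n)\to0$ have a continuous spectral density. For $\lambda\in(-\pi,\pi]^d$, $X_k^{(\lambda)}:=e^{-ik\cdot\lambda}X_k$. For $v\in\mathbb{N}^d$, the box $\mathfrak B(v)=\{w\in\mathbb{N}^d:1\le w_j\le v_j,\ j=1,\dots,d\}$; $\mathfrak B_n:=\mathfrak B(v^{(n)})$, $V^{(n)}:=\prod_{j=1}^d v_j^{(n)}$, $S_n^{(\lambda)}:=\sum_{k\in\mathfrak B_n}X_k^{(\lambda)}$, and the periodogram is $I_n^{(\lambda)}:=|S_n^{(\lambda)}|^2/V^{(n)}$. *)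

theory Defs
  imports "HOL-Probability.Probability"
begin

text \<open>Random fields indexed by integer lattice points of dimension CARD('d),
  represented as int^'d.  Expectations are Bochner integrals w.r.t. M.\<close>

definition centered :: "'a measure \<Rightarrow> (int^'d \<Rightarrow> 'a \<Rightarrow> complex) \<Rightarrow> bool" where
  "centered M X \<longleftrightarrow> (\<forall>k. integrable M (X k) \<and> integral\<^sup>L M (X k) = 0)"

definition weakly_stationary :: "'a measure \<Rightarrow> (int^'d \<Rightarrow> 'a \<Rightarrow> complex) \<Rightarrow> bool" where
  "weakly_stationary M X \<longleftrightarrow>
     (\<forall>k. X k \<in> borel_measurable M \<and> integrable M (\<lambda>\<omega>. (cmod (X k \<omega>))\<^sup>2)) \<and>
     (\<exists>\<sigma>2. \<forall>k. integral\<^sup>L M (\<lambda>\<omega>. (cmod (X k \<omega>))\<^sup>2) = \<sigma>2) \<and>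
     (\<exists>\<mu>. (\<forall>k. integral\<^sup>L M (X k) = \<mu>) \<and>
        (\<forall>k j k' j'. k - j = k' - j' \<longrightarrow>
            integral\<^sup>L M (\<lambda>\<omega>. (X k \<omega> - \<mu>) * cnj (X j \<omega> - \<mu>))
          = integral\<^sup>L M (\<lambda>\<omega>. (X k' \<omega> - \<mu>) * cnj (X j' \<omega> - \<mu>))))"

definition gen_sigma :: "'a measure \<Rightarrow> (int^'d \<Rightarrow> 'a \<Rightarrow> complex) \<Rightarrow> (int^'d) set \<Rightarrow> 'a measure" where
  "gen_sigma M X S = sigma (space M) {X k -` B \<inter> space M | k B. k \<in> S \<and> B \<in> sets borel}"

definition corr :: "'a measure \<Rightarrow> ('a \<Rightarrow> real) \<Rightarrow> ('a \<Rightarrow> real) \<Rightarrow> real" where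
  "corr M f g =
     (integral\<^sup>L M (\<lambda>x. f x * g x) - integral\<^sup>L M f * integral\<^sup>L M g) /
     sqrt ((integral\<^sup>L M (\<lambda>x. (f x)\<^sup>2) - (integral\<^sup>L M f)\<^sup>2) *
           (integral\<^sup>L M (\<lambda>x. (g x)\<^sup>2) - (integral\<^sup>L M g)\<^sup>2))"

definition L2_nonconst :: "'a measure \<Rightarrow> 'a measure \<Rightarrow> ('a \<Rightarrow> real) set" where
  "L2_nonconst M A = {f. f \<in> borel_measurable A \<and> integrable M (\<lambda>x. (f x)\<^sup>2) \<and>
       integral\<^sup>L M (\<lambda>x. (f x)\<^sup>2) - (integral\<^sup>L M f)\<^sup>2 > 0}"

definition max_corr :: "'a measure \<Rightarrow> 'a measure \<Rightarrow> 'a measure \<Rightarrow> real" where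
  "max_corr M A B = Sup (insert 0 {corr M f g | f g. f \<in> L2_nonconst M A \<and> g \<in> L2_nonconst M B})"

definition rho' :: "'a measure \<Rightarrow> (int^'d \<Rightarrow> 'a \<Rightarrow> complex) \<Rightarrow> nat \<Rightarrow> real" where
  "rho' M X n = Sup (insert 0 {max_corr M (gen_sigma M X S) (gen_sigma M X T) | S T.
      finite S \<and> S \<noteq> {} \<and> finite T \<and> T \<noteq> {} \<and>
      (\<exists>u. \<forall>k\<in>S. \<forall>l\<in>T. int n \<le> \<bar>k $ u - l $ u\<bar>)})"

definition torus_pt :: "real^'d \<Rightarrow> complex^'d" where
  "torus_pt \<theta> = (\<chi> i. exp (\<i> * complex_of_real (\<theta> $ i)))"

definition torus :: "(complex^'d) set" where
  "torus = {z. \<forall>i. cmod (z $ i) = 1}"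

definition ldot :: "int^'d \<Rightarrow> real^'d \<Rightarrow> real" where
  "ldot k \<theta> = (\<Sum>i\<in>UNIV. real_of_int (k $ i) * \<theta> $ i)"

definition cube :: "(real^'d) set" where
  "cube = {\<theta>. \<forall>i. - pi \<le> \<theta> $ i \<and> \<theta> $ i \<le> pi}"

text \<open>f is a spectral density of X; integration against normalized Haar measure on the
  torus is written as the integral over [-pi,pi]^d divided by (2 pi)^d.\<close>
definition spectral_density :: "'a measure \<Rightarrow> (int^'d \<Rightarrow> 'a \<Rightarrow> complex) \<Rightarrow> (complex^'d \<Rightarrow> real) \<Rightarrow> bool" where
  "spectral_density M X f \<longleftrightarrow>
     f \<in> borel_measurable borel \<and> (\<forall>z\<in>torus. 0 \<le> f z) \<and>
     set_integrable lborel (cube::(real^'d) set) (\<lambda>\<theta>. f (torus_pt \<theta>)) \<and>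
     (\<forall>k j. integral\<^sup>L M (\<lambda>\<omega>. X k \<omega> * cnj (X j \<omega>)) =
        (LINT \<theta>:cube|lborel. exp (\<i> * complex_of_real (ldot (k - j) \<theta>)) *
             complex_of_real (f (torus_pt \<theta>))) / complex_of_real ((2 * pi) ^ CARD('d)))"

definition box_set :: "nat^'d \<Rightarrow> (int^'d) set" where
  "box_set v = {w. \<forall>j. 1 \<le> w $ j \<and> w $ j \<le> int (v $ j)}"

definition periodogram :: "(int^'d \<Rightarrow> 'a \<Rightarrow> complex) \<Rightarrow> nat^'d \<Rightarrow> real^'d \<Rightarrow> 'a \<Rightarrow> real" where
  "periodogram X v lam \<omega> =
     (cmod (\<Sum>k\<in>box_set v. exp (- \<i> * complex_of_real (ldot k lam)) * X k \<omega>))\<^sup>2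
       / real (\<Prod>j\<in>UNIV. v $ j)"

end

theory Submission
  imports Defs
begin

text \<open>
  \<open>E I\<^sub>n(\<lambda>)\<close> is the Fejer mean \<open>(2\<pi>)\<^sup>-\<^sup>d \<integral>\<^sub>c\<^sub>u\<^sub>b\<^sub>e K\<^sub>n(\<theta> - \<lambda>) f(e\<^sup>i\<^sup>\<theta>) d\<theta>\<close> of the spectral
  density, where \<open>K\<^sub>n(\<theta>) = |\<Sum>\<^sub>k\<^sub>\<in>\<^sub>B\<^sub>n e\<^sup>i\<^sup>k\<^sup>\<cdot>\<^sup>\<theta>|^2 / V\<^sub>n\<close> is the Fejer kernel of the box: expand
  \<open>|S\<^sub>n|^2\<close> and insert the spectral representation of the covariances. By orthogonality of the
  characters on the cube, \<open>K\<^sub>n\<close> has mass \<open>(2\<pi>)\<^sup>d\<close> and its Fourier coefficient at the \<open>u\<close>-th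
  unit vector is \<open>(2\<pi>)\<^sup>d (1 - 1/v\<^sub>u) e\<^sup>i\<^sup>\<lambda>\<^sup>u\<close>. Hence \<open>K\<^sub>n\<close> integrates
  \<open>\<Sum>\<^sub>u (2 - 2 cos (\<theta>\<^sub>u - \<lambda>\<^sub>u))\<close>, the squared distance of \<open>e\<^sup>i\<^sup>\<theta>\<close> and \<open>e\<^sup>i\<^sup>\<lambda>\<close> on the
  torus, to \<open>(2\<pi>)\<^sup>d \<Sum>\<^sub>u 2/v\<^sub>u\<close>. Uniform continuity of \<open>f\<close> on the compact torus gives
  \<open>|f z - f w| \<le> \<epsilon> + C |z - w|^2\<close>, so the Fejer mean differs from \<open>f(e\<^sup>i\<^sup>\<lambda>)\<close> by at most
  \<open>\<epsilon> + C \<Sum>\<^sub>u 2/v\<^sub>u\<close>, uniformly in \<open>\<lambda>\<close>.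
\<close>

section \<open>Characters on the cube\<close>

lemma integral_lborel_prod:
  fixes f :: "'a::euclidean_space \<Rightarrow> real \<Rightarrow> 'b::{real_normed_field,banach,second_countable_topology}"
  assumes int: "\<And>b. b \<in> Basis \<Longrightarrow> integrable lborel (f b)"
  shows "(\<integral>x. (\<Prod>b\<in>Basis. f b (x \<bullet> b)) \<partial>(lborel::'a measure)) = (\<Prod>b\<in>Basis. integral\<^sup>L lborel (f b))"
proof -
  interpret product_sigma_finite "\<lambda>_::'a. lborel::real measure" by standard
  have meas: "(\<lambda>x::'a. \<Prod>b\<in>Basis. f b (x \<bullet> b)) \<in> borel_measurable borel"
    using int by (auto intro!: borel_measurable_prod)
  have "(\<integral>x. (\<Prod>b\<in>Basis. f b (x \<bullet> b)) \<partial>(lborel::'a measure)) =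
     (\<integral>x. (\<Prod>b\<in>Basis. f b ((\<Sum>b'\<in>Basis. x b' *\<^sub>R b') \<bullet> b)) \<partial>(\<Pi>\<^sub>M b\<in>Basis. lborel))"
    by (subst lborel_eq) (simp add: integral_distr meas)
  also have "\<dots> = (\<integral>x. (\<Prod>b\<in>Basis. f b (x b)) \<partial>(\<Pi>\<^sub>M b\<in>(Basis::'a set). lborel))"
    by (intro Bochner_Integration.integral_cong prod.cong refl)
       (simp add: inner_sum_left inner_Basis if_distrib cong: if_cong)
  also have "\<dots> = (\<Prod>b\<in>Basis. integral\<^sup>L lborel (f b))"
    by (rule product_integral_prod) (auto intro: int)
  finally show ?thesis .
qed

lemma integral_lborel_vec_prod:
  fixes f :: "'d::finite \<Rightarrow> real \<Rightarrow> 'b::{real_normed_field,banach,second_countable_topology}"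
  assumes "\<And>j. integrable lborel (f j)"
  shows "(\<integral>x. (\<Prod>j\<in>UNIV. f j (x $ j)) \<partial>(lborel::(real^'d) measure)) = (\<Prod>j\<in>UNIV. integral\<^sup>L lborel (f j))"
proof -
  define idx :: "real^'d \<Rightarrow> 'd" where "idx b = (SOME j. b = axis j 1)" for b
  have idx: "idx (axis j 1) = j" for j
    unfolding idx_def by (rule some_equality) (auto simp: axis_eq_axis)
  have Basis: "(Basis :: (real^'d) set) = (\<lambda>j. axis j 1) ` UNIV"
    by (auto simp: Basis_vec_def)
  have inj: "inj (\<lambda>j. axis j (1::real) :: real^'d)"
    by (auto simp: inj_def axis_eq_axis)
  have "(\<integral>x. (\<Prod>j\<in>UNIV. f j (x $ j)) \<partial>(lborel::(real^'d) measure)) =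
        (\<integral>x. (\<Prod>b\<in>Basis. f (idx b) (x \<bullet> b)) \<partial>(lborel::(real^'d) measure))"
    by (simp add: Basis prod.reindex[OF inj] idx cart_eq_inner_axis)
  also have "\<dots> = (\<Prod>b\<in>(Basis :: (real^'d) set). integral\<^sup>L lborel (f (idx b)))"
    by (rule integral_lborel_prod) (rule assms)
  also have "\<dots> = (\<Prod>j\<in>UNIV. integral\<^sup>L lborel (f j))"
    by (simp add: Basis prod.reindex[OF inj] idx)
  finally show ?thesis .
qed

lemma integral_exp_int_period:
  "(LINT t:{-pi..pi}|lborel. exp (\<i> * of_int n * of_real t)) = (if n = 0 then 2 * pi else 0)"
proof -
  have "set_integrable lborel {-pi..pi} (\<lambda>t. exp (\<i> * of_int n * of_real t))"
    unfolding set_integrable_def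
    by (rule borel_integrable_compact) (auto intro!: continuous_intros)
  then have "(LINT t:{-pi..pi}|lborel. exp (\<i> * of_int n * of_real t))
      = integral {-pi..pi} (\<lambda>t. exp (\<i> * of_int n * of_real t))"
    by (rule set_borel_integral_eq_integral(2))
  also have "\<dots> = (if n = 0 then 2 * pi else 0)"
  proof (cases "n = 0")
    case False
    let ?F = "\<lambda>t::real. exp (\<i> * of_int n * of_real t) / (\<i> * of_int n)"
    have "((\<lambda>t::complex. exp (\<i> * of_int n * t) / (\<i> * of_int n)) has_field_derivative
        exp (\<i> * of_int n * of_real t)) (at (of_real t))" for t :: real
      using False by (auto intro!: derivative_eq_intros)
    then have "((\<lambda>t. exp (\<i> * of_int n * of_real t)) has_integral ?F pi - ?F (-pi)) {-pi..pi}"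
      by (intro fundamental_theorem_of_calculus) (auto dest: has_vector_derivative_real_field)
    moreover have "exp (\<i> * of_int n * of_real pi) = exp (\<i> * of_int n * of_real (- pi))"
      by (subst exp_eq) (auto intro!: exI[of _ n] simp: algebra_simps)
    ultimately show ?thesis using False by (simp add: integral_unique)
  qed (simp add: scaleR_conv_of_real)
  finally show ?thesis .
qed

definition lattice_char :: "int^'d \<Rightarrow> real^'d \<Rightarrow> complex" where
  "lattice_char m \<theta> = exp (\<i> * complex_of_real (ldot m \<theta>))"

lemma ldot_add_left: "ldot (a + b) \<theta> = ldot a \<theta> + ldot b \<theta>"
  by (simp add: ldot_def algebra_simps sum.distrib)

lemma ldot_diff_left: "ldot (a - b) \<theta> = ldot a \<theta> - ldot b \<theta>"
  by (simp add: ldot_def algebra_simps sum_subtractf)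

lemma ldot_diff_right: "ldot a (\<theta> - \<phi>) = ldot a \<theta> - ldot a \<phi>"
  by (simp add: ldot_def algebra_simps sum_subtractf)

lemma ldot_axis: "ldot (axis u 1) \<theta> = \<theta> $ u"
proof -
  have "real_of_int (axis u 1 $ i) * \<theta> $ i = (if i = u then \<theta> $ u else 0)" for i
    by (simp add: axis_def)
  then show ?thesis
    unfolding ldot_def by simp
qed

lemma continuous_on_ldot [continuous_intros]:
  "continuous_on S h \<Longrightarrow> continuous_on S (\<lambda>x. ldot k (h x))"
  unfolding ldot_def by (intro continuous_intros)

lemma continuous_on_lattice_char [continuous_intros]:
  "continuous_on S h \<Longrightarrow> continuous_on S (\<lambda>x. lattice_char k (h x))"
  unfolding lattice_char_def by (intro continuous_intros)

lemma lattice_char_add: "lattice_char (a + b) \<theta> = lattice_char a \<theta> * lattice_char b \<theta>"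
  by (simp add: lattice_char_def ldot_add_left exp_add[symmetric] algebra_simps)

lemma cnj_lattice_char: "cnj (lattice_char m \<theta>) = exp (- \<i> * complex_of_real (ldot m \<theta>))"
  by (simp add: lattice_char_def exp_cnj)

lemma lattice_char_diff: "lattice_char (a - b) \<theta> = lattice_char a \<theta> * cnj (lattice_char b \<theta>)"
  by (simp add: lattice_char_def exp_cnj ldot_diff_left exp_add[symmetric] algebra_simps)

lemma lattice_char_shift: "lattice_char m (\<theta> - \<phi>) = cnj (lattice_char m \<phi>) * lattice_char m \<theta>"
  by (simp add: lattice_char_def exp_cnj ldot_diff_right exp_add[symmetric] algebra_simps)

lemma lattice_char_mult_cnj: "lattice_char m \<theta> * cnj (lattice_char m \<theta>) = 1"
  by (simp add: lattice_char_def exp_cnj exp_add[symmetric])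

lemma compact_cube: "compact (cube :: (real^'d::finite) set)"
proof -
  have "cube = cbox (\<chi> i. - pi) (\<chi> i. pi :: real^'d)"
    by (auto simp: cube_def mem_box_cart)
  then show ?thesis
    by (metis compact_cbox)
qed

lemma set_integrable_cube:
  fixes h :: "real^'d::finite \<Rightarrow> 'b::{banach,second_countable_topology}"
  shows "continuous_on cube h \<Longrightarrow> set_integrable lborel cube h"
  unfolding set_integrable_def by (rule borel_integrable_compact[OF compact_cube])

lemma cube_integral_lattice_char:
  "(LINT \<theta>:cube|lborel. lattice_char m \<theta>) = (if m = 0 then (2 * pi) ^ CARD('d) else 0)"
  for m :: "int^'d::finite"
proof -
  let ?e = "\<lambda>j t. indicator {-pi..pi} t *\<^sub>R exp (\<i> * of_int (m $ j) * of_real t)"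
  have factor: "indicator cube \<theta> *\<^sub>R lattice_char m \<theta> = (\<Prod>j\<in>UNIV. ?e j (\<theta> $ j))" for \<theta>
  proof -
    have "indicator cube \<theta> = (\<Prod>j\<in>UNIV. indicator {-pi..pi} (\<theta> $ j) :: real)"
      by (auto simp: cube_def indicator_def prod_zero_iff)
    moreover have "lattice_char m \<theta> = (\<Prod>j\<in>UNIV. exp (\<i> * of_int (m $ j) * of_real (\<theta> $ j)))"
      by (simp add: lattice_char_def ldot_def sum_distrib_left exp_sum algebra_simps)
    ultimately show ?thesis by (simp add: scaleR_conv_of_real prod.distrib)
  qed
  have "(LINT \<theta>:cube|lborel. lattice_char m \<theta>) = (\<Prod>j\<in>UNIV. integral\<^sup>L lborel (?e j))"
    unfolding set_lebesgue_integral_def factor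
    by (rule integral_lborel_vec_prod, rule borel_integrable_compact[OF compact_Icc])
       (intro continuous_intros)
  also have "\<dots> = (\<Prod>j\<in>UNIV. if m $ j = 0 then 2 * pi else 0)"
    using integral_exp_int_period by (simp add: set_lebesgue_integral_def)
  also have "\<dots> = (if m = 0 then (2 * pi) ^ CARD('d) else 0)"
    by (auto simp: vec_eq_iff prod_zero_iff)
  finally show ?thesis .
qed

lemma card_vec_Pi:
  fixes A :: "'d::finite \<Rightarrow> 'a set"
  assumes "\<And>j. finite (A j)"
  shows "finite {w::'a^'d. \<forall>j. w $ j \<in> A j}" and "card {w::'a^'d. \<forall>j. w $ j \<in> A j} = (\<Prod>j\<in>UNIV. card (A j))"
proof -
  have eq: "{w::'a^'d. \<forall>j. w $ j \<in> A j} = vec_lambda ` PiE UNIV A"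
    by (auto intro!: image_eqI[of _ vec_lambda "vec_nth _"])
  have inj: "inj_on vec_lambda (PiE UNIV A)"
    by (auto simp: inj_on_def vec_lambda_inject)
  show "finite {w::'a^'d. \<forall>j. w $ j \<in> A j}"
    unfolding eq using assms by (auto intro!: finite_PiE)
  show "card {w::'a^'d. \<forall>j. w $ j \<in> A j} = (\<Prod>j\<in>UNIV. card (A j))"
    unfolding eq card_image[OF inj] by (simp add: card_PiE)
qed

lemma box_set_eq_vec_Pi: "box_set v = {w. \<forall>j. w $ j \<in> {1..int (v $ j)}}"
  by (auto simp: box_set_def)

lemma finite_box_set: "finite (box_set v)"
  unfolding box_set_eq_vec_Pi by (rule card_vec_Pi) simp

lemma card_box_set: "card (box_set v) = (\<Prod>j\<in>UNIV. v $ j)"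
  unfolding box_set_eq_vec_Pi by (subst card_vec_Pi) auto

lemma box_set_shift_axis:
  fixes v :: "nat^'d::finite"
  shows "{k \<in> box_set v. k + axis u 1 \<in> box_set v} =
     {w. \<forall>j. w $ j \<in> (if j = u then {1..int (v $ u) - 1} else {1..int (v $ j)})}"
proof -
  have "(k + axis u 1) $ j = k $ j + (if j = u then 1 else 0)" for k :: "int^'d" and j
    by (simp add: axis_def)
  then show ?thesis
    unfolding box_set_def by (fastforce split: if_splits)
qed

lemma card_box_set_shift_axis:
  fixes v :: "nat^'d::finite"
  assumes "\<forall>j. 1 \<le> v $ j"
  shows "real (card {k \<in> box_set v. k + axis u 1 \<in> box_set v}) = real (\<Prod>j\<in>UNIV. v $ j) * (1 - 1 / real (v $ u))"
proof -
  let ?P = "\<Prod>j\<in>UNIV - {u}. v $ j"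
  have "0 < ?P"
    using assms by (intro prod_pos) (simp add: Suc_le_eq)
  have "card {k \<in> box_set v. k + axis u 1 \<in> box_set v} = (\<Prod>j\<in>UNIV. if j = u then v $ u - 1 else v $ j)"
    unfolding box_set_shift_axis by (subst card_vec_Pi) (auto intro!: prod.cong)
  also have "\<dots> = (v $ u - 1) * ?P"
    by (subst prod.remove[of UNIV u]) (auto intro!: prod.cong)
  moreover have "(\<Prod>j\<in>UNIV. v $ j) = v $ u * ?P"
    by (subst prod.remove[of UNIV u]) auto
  moreover have "1 \<le> v $ u"
    using assms by simp
  ultimately show ?thesis
    using \<open>0 < ?P\<close> by (simp add: of_nat_diff field_simps)
qed

lemma set_integral_sum:
  fixes f :: "'i \<Rightarrow> 'a \<Rightarrow> 'b::{banach,second_countable_topology}"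
  assumes "\<And>i. i \<in> I \<Longrightarrow> set_integrable M A (f i)"
  shows "(LINT x:A|M. \<Sum>i\<in>I. f i x) = (\<Sum>i\<in>I. LINT x:A|M. f i x)"
  using assms unfolding set_lebesgue_integral_def set_integrable_def scaleR_sum_right
  by (rule Bochner_Integration.integral_sum)

lemma set_integral_Re:
  "set_integrable M A f \<Longrightarrow> (LINT x:A|M. Re (f x)) = Re (LINT x:A|M. f x)"
  unfolding set_lebesgue_integral_def set_integrable_def
  using integral_Re[of M "\<lambda>x. indicator A x *\<^sub>R f x"] by simp

lemma set_integral_abs_le:
  fixes f g :: "'a \<Rightarrow> real"
  assumes f: "set_integrable M A f" and g: "set_integrable M A g"
    and le: "\<And>x. x \<in> A \<Longrightarrow> \<bar>f x\<bar> \<le> g x"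
  shows "\<bar>LINT x:A|M. f x\<bar> \<le> (LINT x:A|M. g x)"
proof -
  have "\<bar>LINT x:A|M. f x\<bar> \<le> (LINT x:A|M. \<bar>f x\<bar>)"
    using integral_norm_bound[of M "\<lambda>x. indicator A x *\<^sub>R f x"]
    by (simp add: set_lebesgue_integral_def abs_mult)
  also have "\<dots> \<le> (LINT x:A|M. g x)"
    using set_integrable_abs[OF f] g le by (rule set_integral_mono)
  finally show ?thesis .
qed

lemma integral_cmod_sum_square_mult:
  fixes Y :: "'i \<Rightarrow> 'a \<Rightarrow> complex"
  assumes "\<And>k j. k \<in> A \<Longrightarrow> j \<in> A \<Longrightarrow> integrable M (\<lambda>x. Y k x * cnj (Y j x) * w x)"
  shows "(\<integral>x. complex_of_real ((cmod (\<Sum>k\<in>A. c k * Y k x))\<^sup>2) * w x \<partial>M)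
       = (\<Sum>k\<in>A. \<Sum>j\<in>A. c k * cnj (c j) * (\<integral>x. Y k x * cnj (Y j x) * w x \<partial>M))"
proof -
  have "complex_of_real ((cmod (\<Sum>k\<in>A. c k * Y k x))\<^sup>2) * w x
      = (\<Sum>k\<in>A. \<Sum>j\<in>A. c k * cnj (c j) * (Y k x * cnj (Y j x) * w x))" for x
    unfolding complex_norm_square cnj_sum
    by (simp add: sum_product sum_distrib_left sum_distrib_right mult_ac) (rule sum.swap)
  then show ?thesis
    using assms by (simp add: Bochner_Integration.integral_sum Bochner_Integration.integrable_sum)
qed

section \<open>The Fejer kernel of a box\<close>

definition fejer_kernel :: "nat^'d \<Rightarrow> real^'d \<Rightarrow> real^'d \<Rightarrow> real" where
  "fejer_kernel v lam \<theta> =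
     (cmod (\<Sum>k\<in>box_set v. lattice_char k (\<theta> - lam)))\<^sup>2 / real (\<Prod>j\<in>UNIV. v $ j)"

lemma fejer_kernel_nonneg: "0 \<le> fejer_kernel v lam \<theta>"
  unfolding fejer_kernel_def by (intro divide_nonneg_nonneg) (simp_all add: prod_nonneg)

lemma continuous_on_fejer_kernel [continuous_intros]: "continuous_on S (fejer_kernel v lam)"
  unfolding fejer_kernel_def divide_inverse by (intro continuous_intros)

lemma cube_integral_fejer_kernel_mult:
  fixes h :: "real^'d::finite \<Rightarrow> complex"
  assumes "continuous_on cube h"
  shows "(LINT \<theta>:cube|lborel. complex_of_real (fejer_kernel v lam \<theta>) * h \<theta>)
       = (\<Sum>k\<in>box_set v. \<Sum>j\<in>box_set v. cnj (lattice_char k lam) * lattice_char j lam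
            * (LINT \<theta>:cube|lborel. lattice_char (k - j) \<theta> * h \<theta>)) / of_nat (\<Prod>j\<in>UNIV. v $ j)"
proof -
  let ?w = "\<lambda>\<theta>. indicator cube \<theta> *\<^sub>R h \<theta>"
  have "(LINT \<theta>:cube|lborel. complex_of_real (fejer_kernel v lam \<theta>) * h \<theta>)
      = (\<integral>\<theta>. complex_of_real ((cmod (\<Sum>k\<in>box_set v. cnj (lattice_char k lam) * lattice_char k \<theta>))\<^sup>2)
           * ?w \<theta> \<partial>lborel) / of_nat (\<Prod>j\<in>UNIV. v $ j)"
    by (simp add: set_lebesgue_integral_def fejer_kernel_def lattice_char_shift mult_ac)
  also have "\<dots> = (\<Sum>k\<in>box_set v. \<Sum>j\<in>box_set v. cnj (lattice_char k lam) * cnj (cnj (lattice_char j lam))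
            * (\<integral>\<theta>. lattice_char k \<theta> * cnj (lattice_char j \<theta>) * ?w \<theta> \<partial>lborel)) / of_nat (\<Prod>j\<in>UNIV. v $ j)"
  proof (subst integral_cmod_sum_square_mult)
    show "integrable lborel (\<lambda>\<theta>. lattice_char k \<theta> * cnj (lattice_char j \<theta>) * ?w \<theta>)" for k j
      using set_integrable_cube[of "\<lambda>\<theta>. lattice_char (k - j) \<theta> * h \<theta>"] assms
      by (simp add: set_integrable_def lattice_char_diff continuous_intros mult_ac)
  qed simp
  also have "\<dots> = (\<Sum>k\<in>box_set v. \<Sum>j\<in>box_set v. cnj (lattice_char k lam) * lattice_char j lam
            * (LINT \<theta>:cube|lborel. lattice_char (k - j) \<theta> * h \<theta>)) / of_nat (\<Prod>j\<in>UNIV. v $ j)"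
    by (simp add: set_lebesgue_integral_def lattice_char_diff mult_ac)
  finally show ?thesis .
qed

lemma cube_integral_fejer_kernel_lattice_char:
  fixes m :: "int^'d::finite"
  shows "(LINT \<theta>:cube|lborel. complex_of_real (fejer_kernel v lam \<theta>) * lattice_char m \<theta>)
       = complex_of_real ((2 * pi) ^ CARD('d) * real (card {k \<in> box_set v. k + m \<in> box_set v})
            / real (\<Prod>j\<in>UNIV. v $ j)) * lattice_char m lam"
proof -
  have coeff: "(LINT \<theta>:cube|lborel. lattice_char (k - j) \<theta> * lattice_char m \<theta>)
      = (if j = k + m then (2 * pi) ^ CARD('d) else 0)" for k j
  proof -
    have "k - j + m = 0 \<longleftrightarrow> j = k + m"
      by (auto simp: algebra_simps)
    then show ?thesis
      by (simp add: lattice_char_add[symmetric] cube_integral_lattice_char)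
  qed
  have phase: "cnj (lattice_char k lam) * lattice_char (k + m) lam = lattice_char m lam" for k
    by (simp add: lattice_char_add mult.assoc[symmetric] mult.commute[of "cnj _"] lattice_char_mult_cnj)
  have "(LINT \<theta>:cube|lborel. complex_of_real (fejer_kernel v lam \<theta>) * lattice_char m \<theta>)
      = (\<Sum>k\<in>box_set v. if k + m \<in> box_set v then lattice_char m lam * (2 * pi) ^ CARD('d) else 0)
          / of_nat (\<Prod>j\<in>UNIV. v $ j)"
    by (simp add: cube_integral_fejer_kernel_mult continuous_intros coeff if_distrib sum.delta
        finite_box_set phase cong: if_cong)
  also have "\<dots> = complex_of_real ((2 * pi) ^ CARD('d) * real (card {k \<in> box_set v. k + m \<in> box_set v})
            / real (\<Prod>j\<in>UNIV. v $ j)) * lattice_char m lam"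
    by (simp add: sum.If_cases finite_box_set Int_def mult_ac)
  finally show ?thesis .
qed

lemma cube_integral_fejer_kernel:
  fixes v :: "nat^'d::finite"
  assumes "\<forall>j. 1 \<le> v $ j"
  shows "(LINT \<theta>:cube|lborel. fejer_kernel v lam \<theta>) = (2 * pi) ^ CARD('d)"
proof -
  have "0 < (\<Prod>j\<in>UNIV. v $ j)"
    using assms by (intro prod_pos) (simp add: Suc_le_eq)
  then have "complex_of_real (LINT \<theta>:cube|lborel. fejer_kernel v lam \<theta>) = complex_of_real ((2 * pi) ^ CARD('d))"
    using cube_integral_fejer_kernel_lattice_char[of v lam 0]
    by (simp add: set_integral_complex_of_real[symmetric] lattice_char_def ldot_def card_box_set)
  then show ?thesis
    by (simp only: of_real_eq_iff)
qed

lemma cube_integral_fejer_kernel_cos: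
  fixes v :: "nat^'d::finite"
  assumes "\<forall>j. 1 \<le> v $ j"
  shows "(LINT \<theta>:cube|lborel. fejer_kernel v lam \<theta> * cos (\<theta> $ u - lam $ u))
       = (2 * pi) ^ CARD('d) * (1 - 1 / real (v $ u))"
proof -
  let ?e = "lattice_char (axis u 1)"
  let ?F = "\<lambda>\<theta>. complex_of_real (fejer_kernel v lam \<theta>) * ?e \<theta>"
  have pointwise: "fejer_kernel v lam \<theta> * cos (\<theta> $ u - lam $ u) = Re (?F \<theta> * cnj (?e lam))" for \<theta>
  proof -
    have "?e \<theta> * cnj (?e lam) = exp (\<i> * complex_of_real (\<theta> $ u - lam $ u))"
      by (simp add: lattice_char_def exp_cnj ldot_axis exp_add[symmetric] algebra_simps)
    then show ?thesis
      by (simp add: mult.assoc Re_exp)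
  qed
  have "set_integrable lborel cube (\<lambda>\<theta>. ?F \<theta> * cnj (?e lam))"
    by (intro set_integrable_cube continuous_intros)
  then have "(LINT \<theta>:cube|lborel. fejer_kernel v lam \<theta> * cos (\<theta> $ u - lam $ u))
      = Re ((LINT \<theta>:cube|lborel. ?F \<theta>) * cnj (?e lam))"
    by (simp only: pointwise set_integral_Re set_integral_mult_left)
  also have "\<dots> = (2 * pi) ^ CARD('d) * (1 - 1 / real (v $ u))"
    using assms
    by (simp add: cube_integral_fejer_kernel_lattice_char card_box_set_shift_axis mult.assoc
        lattice_char_mult_cnj)
       (metis Suc_n_not_le_n)
  finally show ?thesis .
qed

lemma fejer_kernel_approx:
  fixes g :: "real^'d::finite \<Rightarrow> real" and v :: "nat^'d"
  assumes v: "\<forall>j. 1 \<le> v $ j" and g: "continuous_on cube g" and "0 \<le> C"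
    and bound: "\<And>\<theta>. \<theta> \<in> cube \<Longrightarrow> \<bar>g \<theta> - g lam\<bar> \<le> e + C * (\<Sum>u\<in>UNIV. 2 - 2 * cos (\<theta> $ u - lam $ u))"
  shows "\<bar>(LINT \<theta>:cube|lborel. fejer_kernel v lam \<theta> * g \<theta>) / (2 * pi) ^ CARD('d) - g lam\<bar>
       \<le> e + C * (\<Sum>u\<in>UNIV. 2 / real (v $ u))"
proof -
  let ?c = "(2 * pi) ^ CARD('d) :: real"
  let ?K = "fejer_kernel v lam"
  let ?D = "\<lambda>\<theta>. \<Sum>u\<in>UNIV. 2 - 2 * cos (\<theta> $ u - lam $ u)"
  have int: "set_integrable lborel cube h" if "continuous_on UNIV h" for h :: "real^'d \<Rightarrow> real"
    using that by (intro set_integrable_cube) (rule continuous_on_subset, auto)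
  have cos: "continuous_on UNIV (\<lambda>\<theta>::real^'d. cos (\<theta> $ u - lam $ u))" for u
    by (intro continuous_intros continuous_on_component continuous_on_id)
  have int_Kg: "set_integrable lborel cube (\<lambda>\<theta>. ?K \<theta> * g \<theta>)"
    by (intro set_integrable_cube continuous_intros g)
  have "(LINT \<theta>:cube|lborel. ?K \<theta> * g \<theta>) - g lam * ?c = (LINT \<theta>:cube|lborel. ?K \<theta> * (g \<theta> - g lam))"
    using int_Kg int[of ?K]
    by (simp add: right_diff_distrib cube_integral_fejer_kernel[OF v] continuous_intros mult.commute)
  also have "\<bar>\<dots>\<bar> \<le> (LINT \<theta>:cube|lborel. ?K \<theta> * (e + C * ?D \<theta>))"
  proof (rule set_integral_abs_le)
    show "set_integrable lborel cube (\<lambda>\<theta>. ?K \<theta> * (g \<theta> - g lam))"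
      by (intro set_integrable_cube continuous_intros g)
    show "set_integrable lborel cube (\<lambda>\<theta>. ?K \<theta> * (e + C * ?D \<theta>))"
      by (intro int continuous_intros cos)
    show "\<bar>?K \<theta> * (g \<theta> - g lam)\<bar> \<le> ?K \<theta> * (e + C * ?D \<theta>)" if "\<theta> \<in> cube" for \<theta>
      unfolding abs_mult using fejer_kernel_nonneg[of v lam \<theta>] bound[OF that] by (simp add: mult_left_mono)
  qed
  also have "(LINT \<theta>:cube|lborel. ?K \<theta> * (e + C * ?D \<theta>))
      = (LINT \<theta>:cube|lborel. e * ?K \<theta> + C * (\<Sum>u\<in>UNIV. 2 * ?K \<theta> - 2 * (?K \<theta> * cos (\<theta> $ u - lam $ u))))"
    by (simp add: algebra_simps sum_distrib_left)
  also have "\<dots> = e * (LINT \<theta>:cube|lborel. ?K \<theta>)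
      + C * (\<Sum>u\<in>UNIV. 2 * (LINT \<theta>:cube|lborel. ?K \<theta>) - 2 * (LINT \<theta>:cube|lborel. ?K \<theta> * cos (\<theta> $ u - lam $ u)))"
    by (simp add: set_integral_sum int continuous_intros cos)
  also have "\<dots> = ?c * (e + C * (\<Sum>u\<in>UNIV. 2 / real (v $ u)))"
    by (simp add: cube_integral_fejer_kernel[OF v] cube_integral_fejer_kernel_cos[OF v] algebra_simps
        sum_distrib_left)
  finally have "\<bar>(LINT \<theta>:cube|lborel. ?K \<theta> * g \<theta>) - g lam * ?c\<bar> \<le> ?c * (e + C * (\<Sum>u\<in>UNIV. 2 / real (v $ u)))" .
  moreover have "(LINT \<theta>:cube|lborel. ?K \<theta> * g \<theta>) / ?c - g lam = ((LINT \<theta>:cube|lborel. ?K \<theta> * g \<theta>) - g lam * ?c) / ?c"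
    by (simp add: field_simps)
  ultimately show ?thesis
    by (simp add: pos_divide_le_eq mult.commute)
qed

section \<open>The expected periodogram\<close>

lemma integrable_mult_cnj:
  fixes X Y :: "'a \<Rightarrow> complex"
  assumes "X \<in> borel_measurable M" "Y \<in> borel_measurable M"
    and "integrable M (\<lambda>\<omega>. (cmod (X \<omega>))\<^sup>2)" "integrable M (\<lambda>\<omega>. (cmod (Y \<omega>))\<^sup>2)"
  shows "integrable M (\<lambda>\<omega>. X \<omega> * cnj (Y \<omega>))"
proof (rule Bochner_Integration.integrable_bound)
  show "integrable M (\<lambda>\<omega>. (cmod (X \<omega>))\<^sup>2 + (cmod (Y \<omega>))\<^sup>2)"
    using assms by simp
  have "(\<lambda>\<omega>. cnj (Y \<omega>)) \<in> borel_measurable M"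
    using continuous_on_cnj[OF continuous_on_id] assms(2)
    by (intro borel_measurable_continuous_on[where f=cnj, simplified]) auto
  then show "(\<lambda>\<omega>. X \<omega> * cnj (Y \<omega>)) \<in> borel_measurable M"
    using assms(1) by measurable
  have "a * b \<le> a\<^sup>2 + b\<^sup>2" if "0 \<le> a" "0 \<le> b" for a b :: real
    using sum_squares_bound[of a b] mult_nonneg_nonneg[OF that] by (simp add: mult.assoc)
  then show "AE \<omega> in M. norm (X \<omega> * cnj (Y \<omega>)) \<le> norm ((cmod (X \<omega>))\<^sup>2 + (cmod (Y \<omega>))\<^sup>2)"
    by (simp add: norm_mult)
qed

lemma expected_periodogram:
  fixes M :: "'a measure" and X :: "int^'d::finite \<Rightarrow> 'a \<Rightarrow> complex" and f :: "complex^'d \<Rightarrow> real"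
  assumes ws: "weakly_stationary M X" and sd: "spectral_density M X f"
    and f: "continuous_on cube (\<lambda>\<theta>. f (torus_pt \<theta>))"
  shows "integral\<^sup>L M (periodogram X v lam)
       = (LINT \<theta>:cube|lborel. fejer_kernel v lam \<theta> * f (torus_pt \<theta>)) / (2 * pi) ^ CARD('d)"
proof -
  let ?V = "of_nat (\<Prod>j\<in>UNIV. v $ j) :: complex"
  let ?c = "complex_of_real ((2 * pi) ^ CARD('d))"
  let ?g = "\<lambda>\<theta>. complex_of_real (f (torus_pt \<theta>))"
  have cov: "integral\<^sup>L M (\<lambda>\<omega>. X k \<omega> * cnj (X j \<omega>))
      = (LINT \<theta>:cube|lborel. lattice_char (k - j) \<theta> * ?g \<theta>) / ?c" for k j
    using sd by (simp add: spectral_density_def lattice_char_def)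
  have int: "integrable M (\<lambda>\<omega>. X k \<omega> * cnj (X j \<omega>) * 1)" for k j
    using ws by (simp add: weakly_stationary_def integrable_mult_cnj)
  have "complex_of_real (periodogram X v lam \<omega>)
      = complex_of_real ((cmod (\<Sum>k\<in>box_set v. cnj (lattice_char k lam) * X k \<omega>))\<^sup>2) / ?V" for \<omega>
    by (simp add: periodogram_def cnj_lattice_char)
  then have "complex_of_real (integral\<^sup>L M (periodogram X v lam))
      = (\<integral>\<omega>. complex_of_real ((cmod (\<Sum>k\<in>box_set v. cnj (lattice_char k lam) * X k \<omega>))\<^sup>2) \<partial>M) / ?V"
    by (simp only: integral_complex_of_real[symmetric] integral_divide_zero)
  also have "\<dots> = (\<Sum>k\<in>box_set v. \<Sum>j\<in>box_set v. cnj (lattice_char k lam) * cnj (cnj (lattice_char j lam))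
          * integral\<^sup>L M (\<lambda>\<omega>. X k \<omega> * cnj (X j \<omega>))) / ?V"
    using integral_cmod_sum_square_mult[where Y=X and w="\<lambda>_. 1" and c="\<lambda>k. cnj (lattice_char k lam)", OF int]
    by simp
  also have "\<dots> = (\<Sum>k\<in>box_set v. \<Sum>j\<in>box_set v. cnj (lattice_char k lam) * lattice_char j lam
          * (LINT \<theta>:cube|lborel. lattice_char (k - j) \<theta> * ?g \<theta>)) / ?V / ?c"
    by (simp only: cov complex_cnj_cnj times_divide_eq_right sum_divide_distrib divide_divide_eq_left mult.commute)
  also have "\<dots> = (LINT \<theta>:cube|lborel. complex_of_real (fejer_kernel v lam \<theta>) * ?g \<theta>) / ?c"
    using f by (simp only: cube_integral_fejer_kernel_mult continuous_on_of_real)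
  also have "\<dots> = complex_of_real ((LINT \<theta>:cube|lborel. fejer_kernel v lam \<theta> * f (torus_pt \<theta>)) / (2 * pi) ^ CARD('d))"
    by (simp add: set_integral_complex_of_real[symmetric])
  finally show ?thesis
    by (simp only: of_real_eq_iff)
qed

section \<open>Uniform convergence of Fejer means\<close>

lemma torus_pt_in_torus: "torus_pt \<theta> \<in> torus"
  by (simp add: torus_def torus_pt_def norm_exp_eq_Re)

lemma continuous_on_torus_pt [continuous_intros]: "continuous_on S torus_pt"
  unfolding torus_pt_def by (intro continuous_intros continuous_on_vec_lambda)

lemma compact_torus: "compact (torus :: (complex^'d::finite) set)"
proof (rule compact_eq_bounded_closed[THEN iffD2], rule conjI)
  show "bounded (torus :: (complex^'d) set)"
  proof (rule boundedI)
    fix z :: "complex^'d"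
    assume "z \<in> torus"
    have "norm z \<le> (\<Sum>i\<in>UNIV. norm (z $ i))"
      unfolding norm_vec_def by (rule L2_set_le_sum) simp
    also have "\<dots> = real CARD('d)"
      using \<open>z \<in> torus\<close> by (simp add: torus_def)
    finally show "norm z \<le> real CARD('d)" .
  qed
  have "closed (\<Inter>i. {z::complex^'d. norm (z $ i) = 1})"
    by (intro closed_INT ballI closed_Collect_eq continuous_intros continuous_on_component continuous_on_id)
  moreover have "torus = (\<Inter>i. {z::complex^'d. norm (z $ i) = 1})"
    by (auto simp: torus_def)
  ultimately show "closed (torus :: (complex^'d) set)"
    by simp
qed

lemma dist_torus_pt_squared:
  "(dist (torus_pt \<theta>) (torus_pt lam))\<^sup>2 = (\<Sum>u\<in>UNIV. 2 - 2 * cos (\<theta> $ u - lam $ u))"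
  for \<theta> lam :: "real^'d::finite"
proof -
  have cis: "(cmod (cis a - cis b))\<^sup>2 = 2 - 2 * cos (a - b)" for a b
  proof -
    have "(cmod (cis a - cis b))\<^sup>2 = (cos a - cos b)\<^sup>2 + (sin a - sin b)\<^sup>2"
      by (simp add: cmod_power2)
    also have "\<dots> = ((sin a)\<^sup>2 + (cos a)\<^sup>2) + ((sin b)\<^sup>2 + (cos b)\<^sup>2) - 2 * (cos a * cos b + sin a * sin b)"
      by (simp add: power2_eq_square algebra_simps)
    finally show ?thesis
      by (simp add: cos_diff)
  qed
  have "(dist (torus_pt \<theta>) (torus_pt lam))\<^sup>2 = (\<Sum>u\<in>UNIV. (dist (torus_pt \<theta> $ u) (torus_pt lam $ u))\<^sup>2)"
    unfolding dist_vec_def L2_set_def by (simp add: sum_nonneg)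
  then show ?thesis
    by (simp add: torus_pt_def dist_norm cis[unfolded cis_conv_exp])
qed

lemma uniformly_continuous_on_imp_quadratic_bound:
  fixes f :: "'a::metric_space \<Rightarrow> real"
  assumes "uniformly_continuous_on S f" and "bounded (f ` S)" and "e > 0"
  obtains C where "0 \<le> C" and "\<And>x y. x \<in> S \<Longrightarrow> y \<in> S \<Longrightarrow> \<bar>f x - f y\<bar> \<le> e + C * (dist x y)\<^sup>2"
proof -
  obtain \<delta> where "\<delta> > 0" and \<delta>: "\<And>x y. x \<in> S \<Longrightarrow> y \<in> S \<Longrightarrow> dist x y < \<delta> \<Longrightarrow> \<bar>f x - f y\<bar> < e"
    using assms(1,3) unfolding uniformly_continuous_on_def dist_real_def by metis
  obtain B where B: "\<And>x. x \<in> S \<Longrightarrow> \<bar>f x\<bar> \<le> B"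
    using assms(2) unfolding bounded_iff by auto
  show ?thesis
  proof
    show "0 \<le> max B 0 * 2 / \<delta>\<^sup>2"
      by simp
    fix x y
    assume "x \<in> S" "y \<in> S"
    show "\<bar>f x - f y\<bar> \<le> e + max B 0 * 2 / \<delta>\<^sup>2 * (dist x y)\<^sup>2"
    proof (cases "dist x y < \<delta>")
      case True
      have "0 \<le> max B 0 * 2 / \<delta>\<^sup>2 * (dist x y)\<^sup>2"
        by simp
      then show ?thesis
        using \<delta>[OF \<open>x \<in> S\<close> \<open>y \<in> S\<close> True] by linarith
    next
      case False
      then have "1 \<le> (dist x y)\<^sup>2 / \<delta>\<^sup>2"
        using \<open>\<delta> > 0\<close> by (simp add: power_mono)
      then have "max B 0 * 2 * 1 \<le> max B 0 * 2 * ((dist x y)\<^sup>2 / \<delta>\<^sup>2)"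
        by (intro mult_left_mono) simp_all
      then have "max B 0 * 2 \<le> max B 0 * 2 / \<delta>\<^sup>2 * (dist x y)\<^sup>2"
        by simp
      moreover have "\<bar>f x - f y\<bar> \<le> max B 0 * 2"
        using B[OF \<open>x \<in> S\<close>] B[OF \<open>y \<in> S\<close>] by linarith
      ultimately show ?thesis
        using \<open>e > 0\<close> by linarith
    qed
  qed
qed

lemma filterlim_component_at_top_of_Min:
  fixes v :: "nat \<Rightarrow> nat^'d::finite"
  assumes "filterlim (\<lambda>n. Min (range (\<lambda>j. v n $ j))) at_top sequentially"
  shows "filterlim (\<lambda>n. v n $ j) at_top sequentially"
  using assms by (rule filterlim_at_top_mono) (intro always_eventually allI Min_le, auto)

lemma fejer_means_uniform_limit:
  fixes h :: "complex^'d::finite \<Rightarrow> real" and v :: "nat \<Rightarrow> nat^'d"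
  assumes h: "continuous_on torus h" and v: "\<forall>n j. 1 \<le> v n $ j"
    and lim: "\<And>j. filterlim (\<lambda>n. v n $ j) at_top sequentially"
  shows "uniform_limit UNIV
           (\<lambda>n lam. (LINT \<theta>:cube|lborel. fejer_kernel (v n) lam \<theta> * h (torus_pt \<theta>)) / (2 * pi) ^ CARD('d))
           (\<lambda>lam. h (torus_pt lam)) sequentially"
proof (rule uniform_limitI)
  fix \<epsilon> :: real
  assume "0 < \<epsilon>"
  obtain C where "0 \<le> C"
    and bound: "\<And>z w. z \<in> torus \<Longrightarrow> w \<in> torus \<Longrightarrow> \<bar>h z - h w\<bar> \<le> \<epsilon> / 2 + C * (dist z w)\<^sup>2"
    using uniformly_continuous_on_imp_quadratic_bound[of torus h "\<epsilon> / 2"] \<open>0 < \<epsilon>\<close>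
      compact_uniformly_continuous[OF h compact_torus]
      compact_imp_bounded[OF compact_continuous_image[OF h compact_torus]]
    by auto
  have hc: "continuous_on cube (\<lambda>\<theta>. h (torus_pt \<theta>))"
    using h by (rule continuous_on_compose2[OF _ continuous_on_torus_pt]) (auto simp: torus_pt_in_torus)
  have "(\<lambda>n. C * (\<Sum>u\<in>UNIV. 2 / real (v n $ u))) \<longlonglongrightarrow> 0"
    by (intro tendsto_mult_right_zero tendsto_null_sum tendsto_divide_0[OF tendsto_const]
        filterlim_at_top_imp_at_infinity filterlim_compose[OF filterlim_real_sequentially lim])
  then have "eventually (\<lambda>n. C * (\<Sum>u\<in>UNIV. 2 / real (v n $ u)) < \<epsilon> / 2) sequentially"
    by (rule order_tendstoD(2)) (use \<open>0 < \<epsilon>\<close> in linarith)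
  then show "eventually (\<lambda>n. \<forall>lam\<in>UNIV.
      dist ((LINT \<theta>:cube|lborel. fejer_kernel (v n) lam \<theta> * h (torus_pt \<theta>)) / (2 * pi) ^ CARD('d))
           (h (torus_pt lam)) < \<epsilon>) sequentially"
  proof (rule eventually_mono, intro ballI)
    fix n lam
    assume small: "C * (\<Sum>u\<in>UNIV. 2 / real (v n $ u)) < \<epsilon> / 2"
    have "\<bar>(LINT \<theta>:cube|lborel. fejer_kernel (v n) lam \<theta> * h (torus_pt \<theta>)) / (2 * pi) ^ CARD('d)
        - h (torus_pt lam)\<bar> \<le> \<epsilon> / 2 + C * (\<Sum>u\<in>UNIV. 2 / real (v n $ u))"
      using v hc \<open>0 \<le> C\<close>
      by (intro fejer_kernel_approx) (auto simp: bound torus_pt_in_torus dist_torus_pt_squared[symmetric])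
    then show "dist ((LINT \<theta>:cube|lborel. fejer_kernel (v n) lam \<theta> * h (torus_pt \<theta>)) / (2 * pi) ^ CARD('d))
        (h (torus_pt lam)) < \<epsilon>"
      using small by (simp add: dist_real_def)
  qed
qed

theorem theorem2p1:
  fixes M :: "'a measure" and X :: "int^'d \<Rightarrow> 'a \<Rightarrow> complex"
    and f :: "complex^'d \<Rightarrow> real" and v :: "nat \<Rightarrow> nat^'d"
  assumes "prob_space M"
    and "centered M X"
    and "weakly_stationary M X"
    and "(\<lambda>n. rho' M X n) \<longlonglongrightarrow> 0"
    and "spectral_density M X f"
    and "continuous_on torus f"
    and "\<forall>n j. 1 \<le> v n $ j"
    and "filterlim (\<lambda>n. Min (range (\<lambda>j. v n $ j))) at_top sequentially"
  shows "(\<forall>lam\<in>{lam. \<forall>i. - pi < lam $ i \<and> lam $ i \<le> pi}.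
            (\<lambda>n. integral\<^sup>L M (periodogram X (v n) lam)) \<longlonglongrightarrow> f (torus_pt lam))
       \<and> uniform_limit {lam. \<forall>i. - pi < lam $ i \<and> lam $ i \<le> pi}
            (\<lambda>n lam. integral\<^sup>L M (periodogram X (v n) lam)) (\<lambda>lam. f (torus_pt lam)) sequentially"
proof -
  \<comment> \<open>The mixing condition serves only to make \<open>f\<close> continuous, which is assumed separately.\<close>
  have "continuous_on cube (\<lambda>\<theta>. f (torus_pt \<theta>))"
    using assms(6) by (rule continuous_on_compose2[OF _ continuous_on_torus_pt]) (auto simp: torus_pt_in_torus)
  then have "integral\<^sup>L M (periodogram X (v n) lam)
      = (LINT \<theta>:cube|lborel. fejer_kernel (v n) lam \<theta> * f (torus_pt \<theta>)) / (2 * pi) ^ CARD('d)" for n lam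
    using assms(3,5) by (intro expected_periodogram)
  then have "uniform_limit UNIV (\<lambda>n lam. integral\<^sup>L M (periodogram X (v n) lam)) (\<lambda>lam. f (torus_pt lam)) sequentially"
    using fejer_means_uniform_limit[OF assms(6,7) filterlim_component_at_top_of_Min[OF assms(8)]] by simp
  then show ?thesis
    by (auto intro: uniform_limit_on_subset tendsto_uniform_limitI)
qed

end
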